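(* Let $k \in \mathbb{R}^n$ be a constant vector and consider the dynamics $\dot{x} = k$. Let $\mathcal{X}_0 \subseteq \mathbb{R}^n$ be a nonempty compact convex initial set and let $\mathcal{I} \subseteq \mathbb{R}^n$ be a closed convex location invariant with $\mathcal{X}_0 \cap \mathcal{I} \neq \emptyset$. For $s \ge 0$ let $\mathcal{R}(s) = \mathcal{X}_0 \oplus \{ks\} = \{x + ks \mid x \in \mathcal{X}_0\}$ be the set of states reachable at time $s$, and write $\mathcal{R}(s) \vdash \mathcal{I}$ if $\mathcal{R}(s) \cap \mathcal{I} \neq \emptyset$. Assume that $\mathcal{R}(s) \not\vdash \mathcal{I}$ for some $s \ge 0$, and let $t = \sup\{ s \ge 0 \mid \mathcal{R}(s) \vdash \mathcal{I}\}$ be the exact time at which the reachable states violate the invariant. Let $\delta_C > 0$ (coarse time step) and $\delta_F > 0$ (fine time step). Define the approximate crossing time $t'$ by the following coarse-then-fine search: let $i_C$ be the least positive integer with $\mathcal{R}(i_C \delta_C) \not\vdash \mathcal{I}$, put $t_1 = (i_C - 1)\delta_C$, let $i_F$ be the least nonnegative integer with $\mathcal{R}(t_1 + i_F \delta_F) \not\vdash \mathcal{I}$, and set $t' = t_1 + i_F \delta_F$. Then $|t - t'| \le \delta_F$.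
   Context: The Minkowski sum is $A \oplus B = \{a + b \mid a \in A, b \in B\}$. In the paper's setting the time step $\delta_C$ is $T/10$ and $\delta_F = \delta_C/10$ for a time horizon $T$, and the reachable sets are represented by their support functions $\sup_{\mathcal{X}}(\ell) = \sup\{\ell\cdot x \mid x \in \mathcal{X}\}$; these specific choices are not needed for the claim. *)

theory Defs
  imports "HOL-Analysis.Analysis"
begin

definition reach :: "'a::euclidean_space set \<Rightarrow> 'a \<Rightarrow> real \<Rightarrow> 'a set" where
  "reach X0 k s = {x + s *\<^sub>R k | x. x \<in> X0}"

definition sat_inv :: "'a set \<Rightarrow> 'a set \<Rightarrow> bool" where
  "sat_inv S I \<longleftrightarrow> S \<inter> I \<noteq> {}"

end

theory Submission
  imports Defs
begin

text \<open>The times at which X0 \<oplus> {s k} meets I are exactly those s with s k in the difference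
  set {y - x | y \<in> I, x \<in> X0}; for X0 compact convex and I closed convex this set is closed and
  convex, so the
  admissible times form a closed interval [0, t]. Both searches then look for the first grid point
  beyond t, and the least such point of a grid of width \<delta> starting at or below t lies in
  (t, t + \<delta>]; for the fine grid this is the claim.\<close>

lemma sat_inv_reach_iff_diff:
  "sat_inv (reach X0 k s) I \<longleftrightarrow> s *\<^sub>R k \<in> (\<Union>y\<in>I. \<Union>x\<in>X0. {y - x})"
  unfolding sat_inv_def reach_def by (auto simp: algebra_simps)

lemma closed_sat_inv_times:
  fixes k :: "'a::euclidean_space"
  assumes "compact X0" "closed I"
  shows "closed {s. sat_inv (reach X0 k s) I}"
proof -
  have "closed ((\<lambda>s. s *\<^sub>R k) -` (\<Union>y\<in>I. \<Union>x\<in>X0. {y - x}))"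
    by (rule closed_vimage[OF closed_compact_differences[OF assms(2,1)]]) (intro continuous_intros)
  then show ?thesis by (simp add: sat_inv_reach_iff_diff vimage_def)
qed

lemma convex_sat_inv_times:
  fixes k :: "'a::euclidean_space"
  assumes "convex X0" "convex I"
  shows "convex {s. sat_inv (reach X0 k s) I}"
proof -
  have "convex ((\<lambda>s. s *\<^sub>R k) -` (\<Union>y\<in>I. \<Union>x\<in>X0. {y - x}))"
    using convex_differences[OF assms(2,1)] by (intro convex_linear_vimage linear_scaleR_left)
  then show ?thesis by (simp add: sat_inv_reach_iff_diff vimage_def)
qed

lemma closed_interval_nonneg_le_Sup_iff:
  fixes S :: "real set"
  assumes "closed S" "is_interval S" "0 \<in> S" "s0 \<ge> 0" "s0 \<notin> S" "s \<ge> 0"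
  shows "s \<in> S \<longleftrightarrow> s \<le> Sup {s. s \<ge> 0 \<and> s \<in> S}"
proof -
  let ?S = "{s. s \<ge> 0 \<and> s \<in> S}"
  have between: "x \<in> S" if "a \<in> S" "b \<in> S" "a \<le> x" "x \<le> b" for a b x
    using assms(2) that unfolding is_interval_1 by blast
  have bdd: "bdd_above ?S"
    using between[OF assms(3) _ assms(4)] assms(5) by (intro bdd_aboveI[of _ s0]) force
  have "?S = S \<inter> {0..}" by auto
  then have "closed ?S" using assms(1) by (simp add: closed_Int)
  moreover have "?S \<noteq> {}" using assms(3) by auto
  ultimately have Sup_in: "Sup ?S \<in> S"
    using closed_contains_Sup[OF _ bdd] by blast
  show ?thesis
  proof
    assume "s \<in> S"
    then show "s \<le> Sup ?S" using assms(6) by (intro cSup_upper[OF _ bdd]) auto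
  next
    assume "s \<le> Sup ?S"
    then show "s \<in> S" using between[OF assms(3) Sup_in assms(6)] by blast
  qed
qed

lemma least_grid_point_beyond:
  fixes a t \<delta> :: real
  assumes "a \<le> t" "\<delta> > 0"
  defines "n \<equiv> LEAST i::nat. t < a + real i * \<delta>"
  shows "t < a + real n * \<delta>" and "a + real n * \<delta> \<le> t + \<delta>"
proof -
  obtain m :: nat where "(t - a) / \<delta> < real m" using reals_Archimedean2 by blast
  then have "t < a + real m * \<delta>" using assms(2) by (simp add: field_simps)
  then show beyond: "t < a + real n * \<delta>" unfolding n_def by (rule LeastI)
  show "a + real n * \<delta> \<le> t + \<delta>"
  proof (cases n)
    case 0
    then show ?thesis using assms by simp
  next
    case (Suc p)
    then have "\<not> t < a + real p * \<delta>" using not_less_Least[of p "\<lambda>i. t < a + real i * \<delta>"] n_def by simp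
    moreover have "real n * \<delta> = real p * \<delta> + \<delta>" using Suc by (simp add: distrib_right)
    ultimately show ?thesis by linarith
  qed
qed

lemma sat_inv_reach_iff_le_Sup:
  fixes k :: "'a::euclidean_space"
  assumes "compact X0" "convex X0" "closed I" "convex I" "X0 \<inter> I \<noteq> {}"
    and "\<exists>s\<ge>0. \<not> sat_inv (reach X0 k s) I" and "s \<ge> 0"
  shows "sat_inv (reach X0 k s) I \<longleftrightarrow> s \<le> Sup {s. s \<ge> 0 \<and> sat_inv (reach X0 k s) I}"
proof -
  let ?T = "{s. sat_inv (reach X0 k s) I}"
  obtain s0 where "s0 \<ge> 0" "s0 \<notin> ?T" using assms(6) by blast
  have "0 \<in> ?T" using assms(5) by (auto simp: sat_inv_def reach_def)
  have "is_interval ?T"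
    unfolding is_interval_convex_1 using assms(2,4) by (rule convex_sat_inv_times)
  from closed_interval_nonneg_le_Sup_iff[OF closed_sat_inv_times[OF assms(1,3)] this
      \<open>0 \<in> ?T\<close> \<open>s0 \<ge> 0\<close> \<open>s0 \<notin> ?T\<close> assms(7)]
  show ?thesis by (simp only: mem_Collect_eq)
qed

theorem mainTheorem1:
  fixes k :: "'a::euclidean_space" and X0 I :: "'a set"
    and \<delta>C \<delta>F t t1 t' :: real and iC iF :: nat
  assumes X0: "X0 \<noteq> {}" "compact X0" "convex X0"
    and Inv: "closed I" "convex I"
    and meet: "X0 \<inter> I \<noteq> {}"
    and viol: "\<exists>s\<ge>0. \<not> sat_inv (reach X0 k s) I"
    and t_def: "t = Sup {s. s \<ge> 0 \<and> sat_inv (reach X0 k s) I}"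
    and steps: "\<delta>C > 0" "\<delta>F > 0"
    and iC_def: "iC = (LEAST i::nat. i > 0 \<and> \<not> sat_inv (reach X0 k (real i * \<delta>C)) I)"
    and t1_def: "t1 = (real iC - 1) * \<delta>C"
    and iF_def: "iF = (LEAST i::nat. \<not> sat_inv (reach X0 k (t1 + real i * \<delta>F)) I)"
    and t'_def: "t' = t1 + real iF * \<delta>F"
  shows "\<bar>t - t'\<bar> \<le> \<delta>F"
proof -
  have sat_iff: "sat_inv (reach X0 k s) I \<longleftrightarrow> s \<le> t" if "s \<ge> 0" for s
    unfolding t_def using sat_inv_reach_iff_le_Sup[OF X0(2,3) Inv meet viol that] .
  have t_nonneg: "t \<ge> 0"
    using sat_iff[of 0] meet by (auto simp: sat_inv_def reach_def)
  have "(\<lambda>i::nat. i > 0 \<and> \<not> sat_inv (reach X0 k (real i * \<delta>C)) I) = (\<lambda>i. t < 0 + real i * \<delta>C)"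
  proof (rule ext)
    fix i :: nat
    show "(i > 0 \<and> \<not> sat_inv (reach X0 k (real i * \<delta>C)) I) \<longleftrightarrow> t < 0 + real i * \<delta>C"
      using sat_iff[of "real i * \<delta>C"] t_nonneg steps(1) by (cases "i = 0") auto
  qed
  then have coarse: "t < real iC * \<delta>C" "real iC * \<delta>C \<le> t + \<delta>C"
    using least_grid_point_beyond[OF t_nonneg steps(1)] unfolding iC_def by simp_all
  have "t1 \<le> t"
    using coarse(2) by (simp add: t1_def left_diff_distrib)
  have "iC \<noteq> 0" using coarse(1) t_nonneg by (cases iC) auto
  then have "0 \<le> t1" using steps(1) by (simp add: t1_def)
  have "(\<lambda>i::nat. \<not> sat_inv (reach X0 k (t1 + real i * \<delta>F)) I) = (\<lambda>i. t < t1 + real i * \<delta>F)"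
  proof (rule ext)
    fix i :: nat
    show "\<not> sat_inv (reach X0 k (t1 + real i * \<delta>F)) I \<longleftrightarrow> t < t1 + real i * \<delta>F"
      using sat_iff[of "t1 + real i * \<delta>F"] \<open>0 \<le> t1\<close> steps(2) by (simp add: not_le)
  qed
  then have "t < t'" "t' \<le> t + \<delta>F"
    using least_grid_point_beyond[OF \<open>t1 \<le> t\<close> steps(2)] unfolding iF_def t'_def by simp_all
  then show ?thesis by simp
qed

end
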